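(* Let $(G_1,\oplus_1,\otimes_1)$ and $(G_2,\oplus_2,\otimes_2)$ be generalized gyrovector spaces (GGV's), with gyrometrics $\varrho_1$ and $\varrho_2$ respectively. Suppose $T:G_1\to G_2$ is a surjection that preserves the gyrometric, i.e. $\varrho_2(T\mathbf a,T\mathbf b)=\varrho_1(\mathbf a,\mathbf b)$ for all $\mathbf a,\mathbf b\in G_1$. Then $T$ preserves gyromidpoints: for all $\mathbf a,\mathbf b\in G_1$, \[\mathbf p_2(T\mathbf a,T\mathbf b)=T\,\mathbf p_1(\mathbf a,\mathbf b),\] where $\mathbf p_i$ denotes the gyromidpoint in $G_i$.
   Context: A gyrogroup $(G,\oplus)$ is a set with a binary operation $\oplus$ such that: there is $e\in G$ with $e\oplus a=a$ for all $a$; each $a$ has $\ominus a$ with $\ominus a\oplus a=e$; for all $a,b$ there is an automorphism $\mathrm{gyr}[a,b]$ of $(G,\oplus)$ with $a\oplus(b\oplus c)=(a\oplus b)\oplus\mathrm{gyr}[a,b]c$ for all $c$ (left gyroassociativity); and $\mathrm{gyr}[a,b]=\mathrm{gyr}[a\oplus b,b]$ (left loop property). It is gyrocommutative if $a\oplus b=\mathrm{gyr}[a,b](b\oplus a)$. Write $a\ominus b=a\oplus(\ominus b)$. A generalized gyrovector space (GGV) $(G,\oplus,\otimes)$ consists of a gyrocommutative gyrogroup $(G,\oplus)$, a map $\otimes:\mathbb R\times G\to G$, and an injection $\phi$ of $G$ into a real normed space $(V,\|\cdot\|)$ such that for all $a,b,u,v\in G$ and $r,r_1,r_2\in\mathbb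 R$: (GGV0) $\|\phi(\mathrm{gyr}[u,v]a)\|=\|\phi(a)\|$; (GGV1) $1\otimes a=a$; (GGV2) $(r_1+r_2)\otimes a=(r_1\otimes a)\oplus(r_2\otimes a)$; (GGV3) $(r_1r_2)\otimes a=r_1\otimes(r_2\otimes a)$; (GGV4) $\phi(|r|\otimes a)/\|\phi(r\otimes a)\|=\phi(a)/\|\phi(a)\|$ for $a\neq e$, $r\neq 0$; (GGV5) $\mathrm{gyr}[u,v](r\otimes a)=r\otimes\mathrm{gyr}[u,v]a$; (GGV6) $\mathrm{gyr}[r_1\otimes v,r_2\otimes v]$ is the identity map; (GGVV) the set $\|\phi(G)\|=\{\pm\|\phi(a)\|:a\in G\}\subset\mathbb R$ is a real one-dimensional vector space under some addition $\oplus'$ and scalar multiplication $\otimes'$; (GGV7) $\|\phi(r\otimes a)\|=|r|\otimes'\|\phi(a)\|$; (GGV8) $\|\phi(a\oplus b)\|\le\|\phi(a)\|\oplus'\|\phi(b)\|$ (usual order of $\mathbb R$). The gyrometric of a GGV is $\varrho(a,b)=\|\phi(\ominus a\oplus b)\|$. The gyromidpoint of $a,b$ is $\mathbf p(a,b)=\tfrac12\otimes(a\boxplus b)$, where $a\boxplus b=a\oplus\mathrm{gyr}[a,\ominus b]b$ is the cooperation. *)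

theory Defs
  imports "HOL-Analysis.Analysis"
begin

definition gyrogroup ::
  "('a \<Rightarrow> 'a \<Rightarrow> 'a) \<Rightarrow> 'a \<Rightarrow> ('a \<Rightarrow> 'a) \<Rightarrow> ('a \<Rightarrow> 'a \<Rightarrow> 'a \<Rightarrow> 'a) \<Rightarrow> bool" where
  "gyrogroup gplus e neg gyr \<longleftrightarrow>
     (\<forall>a. gplus e a = a) \<and>
     (\<forall>a. gplus (neg a) a = e) \<and>
     (\<forall>a b. bij (gyr a b) \<and> (\<forall>x y. gyr a b (gplus x y) = gplus (gyr a b x) (gyr a b y))) \<and>
     (\<forall>a b c. gplus a (gplus b c) = gplus (gplus a b) (gyr a b c)) \<and>
     (\<forall>a b. gyr a b = gyr (gplus a b) b)"

definition gyrocommutative_gyrogroup ::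
  "('a \<Rightarrow> 'a \<Rightarrow> 'a) \<Rightarrow> 'a \<Rightarrow> ('a \<Rightarrow> 'a) \<Rightarrow> ('a \<Rightarrow> 'a \<Rightarrow> 'a \<Rightarrow> 'a) \<Rightarrow> bool" where
  "gyrocommutative_gyrogroup gplus e neg gyr \<longleftrightarrow>
     gyrogroup gplus e neg gyr \<and> (\<forall>a b. gplus a b = gyr a b (gplus b a))"

definition real_vs_on :: "real set \<Rightarrow> (real \<Rightarrow> real \<Rightarrow> real) \<Rightarrow> (real \<Rightarrow> real \<Rightarrow> real) \<Rightarrow> bool" where
  "real_vs_on S addp smulp \<longleftrightarrow>
     (\<forall>x\<in>S. \<forall>y\<in>S. addp x y \<in> S) \<and>
     (\<forall>r. \<forall>x\<in>S. smulp r x \<in> S) \<and>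
     (\<forall>x\<in>S. \<forall>y\<in>S. \<forall>z\<in>S. addp (addp x y) z = addp x (addp y z)) \<and>
     (\<forall>x\<in>S. \<forall>y\<in>S. addp x y = addp y x) \<and>
     (\<exists>z\<in>S. (\<forall>x\<in>S. addp z x = x) \<and> (\<forall>x\<in>S. \<exists>y\<in>S. addp y x = z)) \<and>
     (\<forall>r. \<forall>x\<in>S. \<forall>y\<in>S. smulp r (addp x y) = addp (smulp r x) (smulp r y)) \<and>
     (\<forall>r s. \<forall>x\<in>S. smulp (r + s) x = addp (smulp r x) (smulp s x)) \<and>
     (\<forall>r s. \<forall>x\<in>S. smulp (r * s) x = smulp r (smulp s x)) \<and>
     (\<forall>x\<in>S. smulp 1 x = x)"

text \<open>One-dimensional: spanned by a single nonzero vector (the zero vector is smulp 0 v).\<close>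

definition real_vs_1dim_on :: "real set \<Rightarrow> (real \<Rightarrow> real \<Rightarrow> real) \<Rightarrow> (real \<Rightarrow> real \<Rightarrow> real) \<Rightarrow> bool" where
  "real_vs_1dim_on S addp smulp \<longleftrightarrow>
     real_vs_on S addp smulp \<and>
     (\<exists>v\<in>S. v \<noteq> smulp 0 v \<and> (\<forall>x\<in>S. \<exists>r. x = smulp r v))"

definition GGV ::
  "('a \<Rightarrow> 'a \<Rightarrow> 'a) \<Rightarrow> 'a \<Rightarrow> ('a \<Rightarrow> 'a) \<Rightarrow> ('a \<Rightarrow> 'a \<Rightarrow> 'a \<Rightarrow> 'a)
   \<Rightarrow> (real \<Rightarrow> 'a \<Rightarrow> 'a) \<Rightarrow> ('a \<Rightarrow> 'v::real_normed_vector) \<Rightarrow> bool" where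
  "GGV gplus e neg gyr smul phi \<longleftrightarrow>
     gyrocommutative_gyrogroup gplus e neg gyr \<and>
     inj phi \<and>
     (\<forall>u v a. norm (phi (gyr u v a)) = norm (phi a)) \<and>
     (\<forall>a. smul 1 a = a) \<and>
     (\<forall>r1 r2 a. smul (r1 + r2) a = gplus (smul r1 a) (smul r2 a)) \<and>
     (\<forall>r1 r2 a. smul (r1 * r2) a = smul r1 (smul r2 a)) \<and>
     (\<forall>r a. a \<noteq> e \<longrightarrow> r \<noteq> 0 \<longrightarrow>
        phi (smul \<bar>r\<bar> a) /\<^sub>R norm (phi (smul r a)) = phi a /\<^sub>R norm (phi a)) \<and>
     (\<forall>u v r a. gyr u v (smul r a) = smul r (gyr u v a)) \<and>
     (\<forall>r1 r2 v. gyr (smul r1 v) (smul r2 v) = id) \<and>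
     (\<exists>addp smulp.
        real_vs_1dim_on {t. \<exists>a. t = norm (phi a) \<or> t = - norm (phi a)} addp smulp \<and>
        (\<forall>r a. norm (phi (smul r a)) = smulp \<bar>r\<bar> (norm (phi a))) \<and>
        (\<forall>a b. norm (phi (gplus a b)) \<le> addp (norm (phi a)) (norm (phi b))))"

definition gyrometric :: "('a \<Rightarrow> 'a \<Rightarrow> 'a) \<Rightarrow> ('a \<Rightarrow> 'a) \<Rightarrow> ('a \<Rightarrow> 'v::real_normed_vector) \<Rightarrow> 'a \<Rightarrow> 'a \<Rightarrow> real" where
  "gyrometric gplus neg phi a b = norm (phi (gplus (neg a) b))"

definition coop :: "('a \<Rightarrow> 'a \<Rightarrow> 'a) \<Rightarrow> ('a \<Rightarrow> 'a) \<Rightarrow> ('a \<Rightarrow> 'a \<Rightarrow> 'a \<Rightarrow> 'a) \<Rightarrow> 'a \<Rightarrow> 'a \<Rightarrow> 'a" where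
  "coop gplus neg gyr a b = gplus a (gyr a (neg b) b)"

definition gyromidpoint ::
  "('a \<Rightarrow> 'a \<Rightarrow> 'a) \<Rightarrow> ('a \<Rightarrow> 'a) \<Rightarrow> ('a \<Rightarrow> 'a \<Rightarrow> 'a \<Rightarrow> 'a) \<Rightarrow> (real \<Rightarrow> 'a \<Rightarrow> 'a) \<Rightarrow> 'a \<Rightarrow> 'a \<Rightarrow> 'a" where
  "gyromidpoint gplus neg gyr smul a b = smul (1/2) (coop gplus neg gyr a b)"

end

theory Submission
  imports Defs
begin

text \<open>
  The norms of a GGV form a one-dimensional real vector space; reading them through a linear
  coordinate \<kappa> and taking absolute values turns the gyrometric into a genuine real metric,
  the triangle inequality being extracted from GGV8 by comparing norms along rays.
  In this metric the point reflection x \<mapsto> m \<oplus> \<ominus>(\<ominus>m \<oplus> x) about the gyromidpoint m of a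
  and b is an involutive isometry swapping a and b and moving every x by twice its distance
  to m.  Vaisala's proof of the Mazur--Ulam theorem then applies: conjugating an isometry
  that fixes a and b by this reflection yields another such isometry whose displacement of m
  is doubled, so since all displacements of m are bounded, m is fixed.  Applied to the
  isometry obtained by transporting the reflection of the second space through T, this shows
  that T maps gyromidpoints to gyromidpoints.
\<close>

locale Gyrogroup =
  fixes gplus :: "'a \<Rightarrow> 'a \<Rightarrow> 'a" (infixl \<open>\<oplus>\<close> 65)
    and e :: 'a and neg :: "'a \<Rightarrow> 'a" (\<open>\<ominus> _\<close> [81] 80)
    and gyr :: "'a \<Rightarrow> 'a \<Rightarrow> 'a \<Rightarrow> 'a"
  assumes gyrogroup: "gyrogroup gplus e neg gyr"
begin

lemma left_id [simp]: "e \<oplus> a = a"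
  and left_inv [simp]: "\<ominus> a \<oplus> a = e"
  and bij_gyr: "bij (gyr a b)"
  and gyr_plus: "gyr a b (x \<oplus> y) = gyr a b x \<oplus> gyr a b y"
  and left_gyroassoc: "a \<oplus> (b \<oplus> c) = (a \<oplus> b) \<oplus> gyr a b c"
  and left_loop: "gyr a b = gyr (a \<oplus> b) b"
  using gyrogroup unfolding gyrogroup_def by blast+

lemma left_cancel_gyr: "\<ominus> a \<oplus> (a \<oplus> x) = gyr (\<ominus> a) a x"
  by (simp add: left_gyroassoc)

lemma gyr_left_id [simp]: "gyr e a x = x"
proof -
  have "a \<oplus> x = a \<oplus> gyr e a x"
    using left_gyroassoc[of e a x] by simp
  then have "gyr (\<ominus> a) a x = gyr (\<ominus> a) a (gyr e a x)"
    by (metis left_cancel_gyr)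
  then show ?thesis
    using bij_gyr by (metis bij_def injD)
qed

lemma left_cancel [simp]: "\<ominus> a \<oplus> (a \<oplus> x) = x"
  using left_loop[of "\<ominus> a" a] by (simp add: left_cancel_gyr)

lemma plus_left_cancel: "a \<oplus> x = a \<oplus> y \<Longrightarrow> x = y"
  by (metis left_cancel)

lemma right_id [simp]: "a \<oplus> e = a"
  by (metis left_cancel left_inv)

lemma right_inv [simp]: "a \<oplus> \<ominus> a = e"
  by (metis left_cancel right_id)

lemma neg_neg [simp]: "\<ominus> (\<ominus> a) = a"
  by (metis left_inv right_inv plus_left_cancel)

lemma left_cancel' [simp]: "a \<oplus> (\<ominus> a \<oplus> x) = x"
  by (metis left_cancel neg_neg)

lemma neg_unique: "x \<oplus> y = e \<Longrightarrow> y = \<ominus> x"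
  by (metis right_inv plus_left_cancel)

lemma neg_e [simp]: "\<ominus> e = e"
  by (metis neg_unique left_id)

lemma gyr_e [simp]: "gyr a b e = e"
  by (metis gyr_plus left_id plus_left_cancel right_id)

lemma gyr_neg: "gyr a b (\<ominus> x) = \<ominus> gyr a b x"
  by (metis gyr_plus right_inv gyr_e neg_unique)

lemma neg_plus_translate: "\<ominus> (a \<oplus> x) \<oplus> (a \<oplus> y) = gyr a x (\<ominus> x \<oplus> y)"
  by (metis left_gyroassoc left_cancel left_cancel')

lemma gyrator_identity: "gyr a b x = \<ominus> (a \<oplus> b) \<oplus> (a \<oplus> (b \<oplus> x))"
  by (metis left_gyroassoc left_cancel)

lemma neg_plus: "\<ominus> (a \<oplus> b) = gyr a b (\<ominus> b \<oplus> \<ominus> a)"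
  by (metis left_gyroassoc left_cancel' right_inv neg_unique)

lemma gyr_conj: "gyr (gyr u v x) (gyr u v y) (gyr u v z) = gyr u v (gyr x y z)"
proof -
  have "gyr u v x \<oplus> (gyr u v y \<oplus> gyr u v z) = gyr u v (x \<oplus> (y \<oplus> z))"
    by (simp add: gyr_plus)
  also have "\<dots> = (gyr u v x \<oplus> gyr u v y) \<oplus> gyr u v (gyr x y z)"
    by (simp add: left_gyroassoc gyr_plus)
  finally show ?thesis
    by (metis left_gyroassoc plus_left_cancel)
qed

lemma gyr_plus_right_cancel: "gyr b (a \<oplus> b) (gyr a b x) = x"
proof -
  have "gyr (\<ominus> a) (a \<oplus> b) = gyr b (a \<oplus> b)"
    by (metis left_loop left_cancel)
  moreover have "\<ominus> a \<oplus> ((a \<oplus> b) \<oplus> gyr a b x) = b \<oplus> gyr (\<ominus> a) (a \<oplus> b) (gyr a b x)"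
    by (metis left_gyroassoc left_cancel)
  ultimately show ?thesis
    by (metis left_gyroassoc left_cancel plus_left_cancel)
qed

end

locale Gyrocommutative_gyrogroup = Gyrogroup +
  assumes gyrocommutative: "a \<oplus> b = gyr a b (b \<oplus> a)"

context Gyrocommutative_gyrogroup
begin

lemma right_loop: "gyr a b = gyr a (b \<oplus> a)"
proof
  fix y
  have "gyr (a \<oplus> b) (gyr a b a) (gyr a b x) = gyr a (b \<oplus> a) (gyr b a x)" for x
  proof -
    have "a \<oplus> (b \<oplus> (a \<oplus> x)) = ((a \<oplus> b) \<oplus> gyr a b a) \<oplus> gyr (a \<oplus> b) (gyr a b a) (gyr a b x)"
      by (simp only: left_gyroassoc[of a b] gyr_plus left_gyroassoc[of "a \<oplus> b"])
    moreover have "a \<oplus> (b \<oplus> (a \<oplus> x)) = (a \<oplus> (b \<oplus> a)) \<oplus> gyr a (b \<oplus> a) (gyr b a x)"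
      by (simp only: left_gyroassoc[of b a x] left_gyroassoc[of a "b \<oplus> a"])
    ultimately have "((a \<oplus> b) \<oplus> gyr a b a) \<oplus> gyr (a \<oplus> b) (gyr a b a) (gyr a b x)
        = ((a \<oplus> b) \<oplus> gyr a b a) \<oplus> gyr a (b \<oplus> a) (gyr b a x)"
      using left_gyroassoc[of a b a] by simp
    then show ?thesis
      by (rule plus_left_cancel)
  qed
  moreover have "gyr (a \<oplus> b) (gyr a b a) (gyr a b x) = gyr a b (gyr b a x)" for x
  proof -
    have "gyr (a \<oplus> b) (gyr a b a) (gyr a b x) = gyr (gyr a b (b \<oplus> a)) (gyr a b a) (gyr a b x)"
      by (simp only: gyrocommutative[symmetric])
    also have "\<dots> = gyr a b (gyr (b \<oplus> a) a x)"
      by (rule gyr_conj)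
    finally show ?thesis
      by (simp only: left_loop[symmetric])
  qed
  moreover obtain x where "y = gyr b a x"
    using bij_gyr[of b a] by (meson bij_def surjD)
  ultimately show "gyr a b y = gyr a (b \<oplus> a) y"
    by simp
qed

lemma gyr_inverse: "gyr b a (gyr a b x) = x"
  by (metis gyr_plus_right_cancel right_loop)

end

lemma Gyrocommutative_gyrogroupI:
  "gyrocommutative_gyrogroup gplus e neg gyr \<Longrightarrow> Gyrocommutative_gyrogroup gplus e neg gyr"
  unfolding gyrocommutative_gyrogroup_def Gyrocommutative_gyrogroup_def
    Gyrocommutative_gyrogroup_axioms_def Gyrogroup_def by blast

lemma pow2_mult_bounded_imp_zero:
  fixes d K :: real
  assumes "d \<ge> 0" and "\<And>n. 2 ^ n * d \<le> K"
  shows "d = 0"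
proof (rule ccontr)
  assume "d \<noteq> 0"
  with assms(1) have "d > 0" by simp
  obtain n where "K / d < 2 ^ n"
    using real_arch_pow[of 2 "K / d"] by auto
  with \<open>d > 0\<close> have "K < 2 ^ n * d"
    by (simp add: divide_less_eq)
  with assms(2)[of n] show False by simp
qed

lemma isometry_fixing_reflected_pair_fixes_centre:
  fixes d :: "'a \<Rightarrow> 'a \<Rightarrow> real"
  assumes "Metric_space UNIV d"
    and \<sigma>_involution: "\<And>x. \<sigma> (\<sigma> x) = x"
    and \<sigma>_isometry: "\<And>x y. d (\<sigma> x) (\<sigma> y) = d x y"
    and \<sigma>_displacement: "\<And>x. d (\<sigma> x) x = 2 * d x m"
    and "\<sigma> a = b"
    and "bij h" "\<And>x y. d (h x) (h y) = d x y" "h a = a" "h b = b"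
  shows "h m = m"
proof -
  interpret Metric_space UNIV d by fact
  define fixing where
    "fixing h \<longleftrightarrow> bij h \<and> (\<forall>x y. d (h x) (h y) = d x y) \<and> h a = a \<and> h b = b" for h
  have "\<sigma> m = m"
    using \<sigma>_displacement[of m] by simp
  have "\<sigma> b = a"
    using \<open>\<sigma> a = b\<close> \<sigma>_involution by metis
  have conjugate: "fixing (\<sigma> \<circ> inv h \<circ> \<sigma> \<circ> h) \<and> d ((\<sigma> \<circ> inv h \<circ> \<sigma> \<circ> h) m) m = 2 * d (h m) m"
    if "fixing h" for h
  proof -
    from that have h: "bij h" "\<And>x y. d (h x) (h y) = d x y" "h a = a" "h b = b"
      unfolding fixing_def by auto
    have inv_h: "d (inv h x) (inv h y) = d x y" for x y
      using h(2)[of "inv h x" "inv h y"] \<open>bij h\<close> by (simp add: bij_is_surj surj_f_inv_f)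
    have "inv h a = a" "inv h b = b"
      using h by (metis bij_inv_eq_iff)+
    then have "fixing (\<sigma> \<circ> inv h \<circ> \<sigma> \<circ> h)"
      unfolding fixing_def
      using h \<open>\<sigma> a = b\<close> \<open>\<sigma> b = a\<close>
      by (auto simp: inv_h \<sigma>_isometry bij_imp_bij_inv involuntory_imp_bij \<sigma>_involution intro!: bij_comp)
    moreover have "d (\<sigma> (inv h (\<sigma> (h m)))) m = 2 * d (h m) m"
      by (metis \<open>\<sigma> m = m\<close> \<sigma>_isometry inv_h \<open>bij h\<close> bij_inv_eq_iff \<sigma>_displacement)
    ultimately show ?thesis by simp
  qed
  have "2 ^ n * d (h m) m \<le> d m a + d a m" if "fixing h" for n h
    using that
  proof (induction n arbitrary: h)
    case 0
    then have "d (h m) a = d m a"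
      unfolding fixing_def by metis
    then show ?case
      using triangle[of "h m" a m] by simp
  next
    case (Suc n)
    have "2 ^ n * d ((\<sigma> \<circ> inv h \<circ> \<sigma> \<circ> h) m) m \<le> d m a + d a m"
      using Suc.IH conjugate[OF Suc.prems] by blast
    then show ?case
      using conjugate[OF Suc.prems] by (simp add: mult.assoc mult.left_commute)
  qed
  then have "d (h m) m = 0"
    using assms(6-9) by (intro pow2_mult_bounded_imp_zero[of _ "d m a + d a m"]) (auto simp: fixing_def)
  then show ?thesis by simp
qed

definition linear_coordinate ::
  "real set \<Rightarrow> (real \<Rightarrow> real \<Rightarrow> real) \<Rightarrow> (real \<Rightarrow> real \<Rightarrow> real) \<Rightarrow> (real \<Rightarrow> real) \<Rightarrow> bool" where
  "linear_coordinate S addp smulp \<kappa> \<longleftrightarrow>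
     inj_on \<kappa> S \<and>
     (\<forall>x\<in>S. \<forall>y\<in>S. addp x y \<in> S \<and> \<kappa> (addp x y) = \<kappa> x + \<kappa> y) \<and>
     (\<forall>r. \<forall>x\<in>S. smulp r x \<in> S \<and> \<kappa> (smulp r x) = r * \<kappa> x)"

lemma real_vs_1dim_on_linear_coordinate:
  assumes "real_vs_1dim_on S addp smulp"
  obtains \<kappa> where "linear_coordinate S addp smulp \<kappa>"
proof -
  from assms obtain v where v: "v \<in> S" "v \<noteq> smulp 0 v" "\<And>x. x \<in> S \<Longrightarrow> \<exists>r. x = smulp r v"
    unfolding real_vs_1dim_on_def by blast
  have vs: "real_vs_on S addp smulp"
    using assms unfolding real_vs_1dim_on_def by blast
  have distrib: "smulp (r + s) v = addp (smulp r v) (smulp s v)"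
    and assoc: "smulp (r * s) v = smulp r (smulp s v)"
    and one: "smulp 1 v = v" for r s
    using vs v(1) unfolding real_vs_on_def by blast+
  have addp_closed: "addp x y \<in> S" if "x \<in> S" "y \<in> S" for x y
    using vs that unfolding real_vs_on_def by simp
  have smulp_closed: "smulp r x \<in> S" if "x \<in> S" for x r
    using vs that unfolding real_vs_on_def by simp
  have unique: "r = s" if "smulp r v = smulp s v" for r s
  proof (rule ccontr)
    assume "r \<noteq> s"
    have "smulp (r - s) v = smulp 0 v"
      using distrib[of r "- s"] distrib[of s "- s"] that by simp
    then have "smulp (inverse (r - s) * (r - s)) v = smulp (inverse (r - s) * 0) v"
      by (simp only: assoc)
    with \<open>r \<noteq> s\<close> have "v = smulp 0 v"
      by (simp add: one)
    with v(2) show False ..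
  qed
  define \<kappa> where "\<kappa> t = (THE r. t = smulp r v)" for t
  have \<kappa>_smulp: "\<kappa> (smulp r v) = r" for r
    unfolding \<kappa>_def by (rule the_equality) (auto intro: unique)
  have \<kappa>: "x = smulp (\<kappa> x) v" if "x \<in> S" for x
    using v(3)[OF that] \<kappa>_smulp by metis
  have "linear_coordinate S addp smulp \<kappa>"
    unfolding linear_coordinate_def
  proof (intro conjI ballI allI)
    show "inj_on \<kappa> S"
      using \<kappa> by (metis inj_onI)
    fix x y assume "x \<in> S" "y \<in> S"
    show "addp x y \<in> S"
      using \<open>x \<in> S\<close> \<open>y \<in> S\<close> by (rule addp_closed)
    show "\<kappa> (addp x y) = \<kappa> x + \<kappa> y"
      using \<kappa>[OF \<open>x \<in> S\<close>] \<kappa>[OF \<open>y \<in> S\<close>] distrib \<kappa>_smulp by metis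
  next
    fix r x assume "x \<in> S"
    show "smulp r x \<in> S"
      using \<open>x \<in> S\<close> by (rule smulp_closed)
    show "\<kappa> (smulp r x) = r * \<kappa> x"
      using \<kappa>[OF \<open>x \<in> S\<close>] assoc \<kappa>_smulp by metis
  qed
  then show thesis ..
qed

text \<open>The GGV axioms, with the vector space structure GGVV on the norms replaced by a linear
  coordinate \<kappa> for it (see the next lemma).\<close>

locale GGV_space = Gyrocommutative_gyrogroup +
  fixes smul :: "real \<Rightarrow> 'a \<Rightarrow> 'a" (infixr \<open>\<otimes>\<close> 75)
    and phi :: "'a \<Rightarrow> 'v::real_normed_vector"
    and addp smulp :: "real \<Rightarrow> real \<Rightarrow> real" and \<kappa> :: "real \<Rightarrow> real"
  assumes inj_phi: "inj phi"
    and norm_phi_gyr: "norm (phi (gyr u v a)) = norm (phi a)"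
    and smul_one [simp]: "1 \<otimes> a = a"
    and smul_add: "(r + s) \<otimes> a = r \<otimes> a \<oplus> s \<otimes> a"
    and smul_mult: "(r * s) \<otimes> a = r \<otimes> s \<otimes> a"
    and smul_direction: "a \<noteq> e \<Longrightarrow> r \<noteq> 0 \<Longrightarrow>
      phi (\<bar>r\<bar> \<otimes> a) /\<^sub>R norm (phi (r \<otimes> a)) = phi a /\<^sub>R norm (phi a)"
    and gyr_smul_smul: "gyr (r \<otimes> v) (s \<otimes> v) = id"
    and linear_coordinate: "linear_coordinate {t. \<exists>a. t = norm (phi a) \<or> t = - norm (phi a)} addp smulp \<kappa>"
    and norm_phi_smul: "norm (phi (r \<otimes> a)) = smulp \<bar>r\<bar> (norm (phi a))"
    and norm_phi_plus_le: "norm (phi (a \<oplus> b)) \<le> addp (norm (phi a)) (norm (phi b))"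

lemma GGV_imp_GGV_space:
  assumes "GGV gplus e neg gyr smul phi"
  obtains addp smulp \<kappa> where "GGV_space gplus e neg gyr smul phi addp smulp \<kappa>"
proof -
  from assms obtain addp smulp where
    vs: "real_vs_1dim_on {t. \<exists>a. t = norm (phi a) \<or> t = - norm (phi a)} addp smulp" and
    "\<forall>r a. norm (phi (smul r a)) = smulp \<bar>r\<bar> (norm (phi a))"
    "\<forall>a b. norm (phi (gplus a b)) \<le> addp (norm (phi a)) (norm (phi b))"
    unfolding GGV_def by (elim conjE exE) blast
  moreover obtain \<kappa> where "linear_coordinate {t. \<exists>a. t = norm (phi a) \<or> t = - norm (phi a)} addp smulp \<kappa>"
    using real_vs_1dim_on_linear_coordinate[OF vs] .
  ultimately show thesis
    using assms unfolding GGV_def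
    by (intro that GGV_space.intro GGV_space_axioms.intro Gyrocommutative_gyrogroupI) auto
qed

context GGV_space
begin

lemma smul_zero [simp]: "0 \<otimes> a = e"
  using smul_add[of 0 0 a] by (metis add_0 plus_left_cancel right_id)

lemma smul_minus_one: "(- 1) \<otimes> a = \<ominus> a"
  using smul_add[of 1 "- 1" a] by (simp add: neg_unique)

lemma smul_two: "2 \<otimes> a = a \<oplus> a"
  using smul_add[of 1 1 a] by simp

lemma gyr_self [simp]: "gyr a a x = x"
  using gyr_smul_smul[of 1 a 1] by simp

lemma half_plus_half: "(1/2) \<otimes> w \<oplus> (1/2) \<otimes> w = w"
  by (metis smul_two smul_mult smul_one nonzero_mult_div_cancel_left times_divide_eq_right zero_neq_numeral)

lemma neg_half_plus: "\<ominus> ((1/2) \<otimes> w) \<oplus> w = (1/2) \<otimes> w"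
proof -
  have "\<ominus> ((1/2) \<otimes> w) = (- 1/2) \<otimes> w"
    using smul_mult[of "- 1" "1/2" w] by (simp add: smul_minus_one)
  then show ?thesis
    using smul_add[of "- 1/2" 1 w] by simp
qed

abbreviation Norms :: "real set" where
  "Norms \<equiv> {t. \<exists>a. t = norm (phi a) \<or> t = - norm (phi a)}"

lemma norm_phi_in_Norms: "norm (phi a) \<in> Norms" "- norm (phi a) \<in> Norms"
  by auto

lemma \<kappa>_inj: "x \<in> Norms \<Longrightarrow> y \<in> Norms \<Longrightarrow> \<kappa> x = \<kappa> y \<Longrightarrow> x = y"
  using linear_coordinate unfolding linear_coordinate_def inj_on_def by blast

lemma addp_in_Norms: "x \<in> Norms \<Longrightarrow> y \<in> Norms \<Longrightarrow> addp x y \<in> Norms"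
  and \<kappa>_addp: "x \<in> Norms \<Longrightarrow> y \<in> Norms \<Longrightarrow> \<kappa> (addp x y) = \<kappa> x + \<kappa> y"
  and \<kappa>_smulp: "x \<in> Norms \<Longrightarrow> \<kappa> (smulp r x) = r * \<kappa> x"
  using linear_coordinate unfolding linear_coordinate_def by blast+

lemma \<kappa>_norm_smul: "\<kappa> (norm (phi (r \<otimes> a))) = \<bar>r\<bar> * \<kappa> (norm (phi a))"
  using \<kappa>_smulp[OF norm_phi_in_Norms(1)] by (simp add: norm_phi_smul)

lemma norm_phi_eq_if_\<kappa>_eq: "\<kappa> (norm (phi a)) = \<kappa> (norm (phi b)) \<Longrightarrow> norm (phi a) = norm (phi b)"
  by (rule \<kappa>_inj[OF norm_phi_in_Norms(1) norm_phi_in_Norms(1)])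

lemma norm_phi_neg: "norm (phi (\<ominus> a)) = norm (phi a)"
  using \<kappa>_norm_smul[of "- 1" a] by (intro norm_phi_eq_if_\<kappa>_eq) (simp add: smul_minus_one)

definition cnorm :: "'a \<Rightarrow> real" where
  "cnorm a = \<bar>\<kappa> (norm (phi a))\<bar>"

lemma \<kappa>_norm_eq_sign_cnorm:
  obtains \<epsilon> :: real where "\<bar>\<epsilon>\<bar> = 1" and "\<And>a. \<kappa> (norm (phi a)) = \<epsilon> * cnorm a"
proof -
  \<comment> \<open>If \<kappa> took both signs on norms, every element of Norms would be a norm, hence
    nonnegative; but Norms also contains the negated norms.\<close>
  have "(\<forall>a. 0 \<le> \<kappa> (norm (phi a))) \<or> (\<forall>a. \<kappa> (norm (phi a)) \<le> 0)"
  proof (rule ccontr)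
    assume "\<not> ?thesis"
    then obtain a b where a: "\<kappa> (norm (phi a)) < 0" and b: "0 < \<kappa> (norm (phi b))"
      by (auto simp: not_le)
    have nonneg: "0 \<le> t" if "t \<in> Norms" for t
    proof -
      obtain c where "\<kappa> (norm (phi c)) = \<kappa> t"
      proof (cases "0 \<le> \<kappa> t")
        case True
        with b show thesis
          by (intro that[of "(\<kappa> t / \<kappa> (norm (phi b))) \<otimes> b"]) (simp add: \<kappa>_norm_smul)
      next
        case False
        with a show thesis
          by (intro that[of "(\<kappa> t / \<kappa> (norm (phi a))) \<otimes> a"])
            (simp add: \<kappa>_norm_smul divide_nonpos_neg)
      qed
      then have "norm (phi c) = t"
        by (rule \<kappa>_inj[OF norm_phi_in_Norms(1) that])
      then show ?thesis
        using norm_ge_zero[of "phi c"] by simp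
    qed
    have "norm (phi a) = 0" "norm (phi b) = 0"
      using nonneg[OF norm_phi_in_Norms(2)[of a]] nonneg[OF norm_phi_in_Norms(2)[of b]] by simp_all
    with a b show False
      by simp
  qed
  then show thesis
  proof
    assume "\<forall>a. 0 \<le> \<kappa> (norm (phi a))"
    then show thesis
      by (intro that[of 1]) (simp_all add: cnorm_def)
  next
    assume "\<forall>a. \<kappa> (norm (phi a)) \<le> 0"
    then show thesis
      by (intro that[of "- 1"]) (simp_all add: cnorm_def)
  qed
qed

lemma cnorm_nonneg [simp]: "0 \<le> cnorm a"
  by (simp add: cnorm_def)

lemma cnorm_smul: "cnorm (r \<otimes> a) = \<bar>r\<bar> * cnorm a"
  by (simp add: cnorm_def \<kappa>_norm_smul abs_mult)

lemma cnorm_gyr [simp]: "cnorm (gyr u v a) = cnorm a"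
  by (simp add: cnorm_def norm_phi_gyr)

lemma cnorm_neg [simp]: "cnorm (\<ominus> a) = cnorm a"
  by (simp add: cnorm_def norm_phi_neg)

lemma cnorm_eq_0_iff [simp]: "cnorm a = 0 \<longleftrightarrow> a = e"
proof
  assume "cnorm a = 0"
  then have "\<kappa> (norm (phi a)) = 0"
    by (simp add: cnorm_def)
  then have "norm (phi a) = norm (phi e)" "norm (phi (2 \<otimes> a)) = norm (phi a)"
    using \<kappa>_norm_smul[of 0 a] \<kappa>_norm_smul[of 2 a] by (auto intro!: norm_phi_eq_if_\<kappa>_eq)
  show "a = e"
  proof (rule ccontr)
    assume "a \<noteq> e"
    show False
    proof (cases "norm (phi a) = 0")
      case True
      then have "phi a = phi e"
        using \<open>norm (phi a) = norm (phi e)\<close> by simp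
      with \<open>a \<noteq> e\<close> inj_phi show False
        by (metis injD)
    next
      case False
      then have "phi (2 \<otimes> a) = phi a"
        using smul_direction[OF \<open>a \<noteq> e\<close>, of 2] \<open>norm (phi (2 \<otimes> a)) = norm (phi a)\<close> by simp
      then have "a \<oplus> a = a \<oplus> e"
        using inj_phi by (simp add: injD smul_two)
      with \<open>a \<noteq> e\<close> show False
        using plus_left_cancel by blast
    qed
  qed
next
  show "a = e \<Longrightarrow> cnorm a = 0"
    using cnorm_smul[of 0 e] by simp
qed

lemma cnorm_e [simp]: "cnorm e = 0"
  by simp

lemma norm_phi_smul_le:
  assumes "0 \<le> l" "l \<le> 1"
  shows "norm (phi (l \<otimes> x)) \<le> norm (phi x)"
proof -
  define r s where "r = (1 + l) / 2" and "s = (1 - l) / 2"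
  have "0 \<le> r" "0 \<le> s" "r + s = 1"
    using assms by (auto simp: r_def s_def field_simps)
  have "l \<otimes> x = r \<otimes> x \<oplus> (- s) \<otimes> x"
    using smul_add[of r "- s" x] by (simp add: r_def s_def field_simps)
  then have "norm (phi (l \<otimes> x)) \<le> addp (norm (phi (r \<otimes> x))) (norm (phi (s \<otimes> x)))"
    using norm_phi_plus_le norm_phi_smul by (metis abs_minus_cancel)
  also have "\<dots> = norm (phi x)"
  proof (rule \<kappa>_inj[OF addp_in_Norms norm_phi_in_Norms(1)])
    show "\<kappa> (addp (norm (phi (r \<otimes> x))) (norm (phi (s \<otimes> x)))) = \<kappa> (norm (phi x))"
      using \<open>0 \<le> r\<close> \<open>0 \<le> s\<close> \<open>r + s = 1\<close>
      by (simp add: \<kappa>_addp[OF norm_phi_in_Norms(1) norm_phi_in_Norms(1)] \<kappa>_norm_smul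
          distrib_right[symmetric])
  qed (rule norm_phi_in_Norms(1))+
  finally show ?thesis .
qed

lemma cnorm_plus_le: "cnorm (a \<oplus> b) \<le> cnorm a + cnorm b"
proof (rule ccontr)
  obtain \<epsilon> where \<epsilon>: "\<bar>\<epsilon>\<bar> = 1" "\<And>x. \<kappa> (norm (phi x)) = \<epsilon> * cnorm x"
    using \<kappa>_norm_eq_sign_cnorm by blast
  define c w where "c = a \<oplus> b" and "w = addp (norm (phi a)) (norm (phi b))"
  assume "\<not> cnorm (a \<oplus> b) \<le> cnorm a + cnorm b"
  then have less: "cnorm a + cnorm b < cnorm c"
    by (simp add: c_def)
  define l where "l = (cnorm a + cnorm b) / cnorm c"
  have "0 < cnorm c"
    using less cnorm_nonneg[of a] cnorm_nonneg[of b] by linarith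
  have "0 \<le> l" "l \<le> 1"
    using less by (auto simp: l_def cnorm_def)
  have "w \<in> Norms"
    unfolding w_def by (intro addp_in_Norms norm_phi_in_Norms(1))
  have \<kappa>_w: "\<kappa> w = \<epsilon> * (cnorm a + cnorm b)"
    by (simp add: w_def \<kappa>_addp[OF norm_phi_in_Norms(1) norm_phi_in_Norms(1)] \<epsilon>(2) distrib_left)
  have "\<kappa> (norm (phi (l \<otimes> c))) = \<kappa> w"
    using \<open>0 < cnorm c\<close> by (auto simp: \<kappa>_w \<epsilon>(2) cnorm_smul l_def)
  \<comment> \<open>The point l \<otimes> c of the ray through c realises the bound w, so w \<le> norm (phi c) \<le> w.\<close>
  then have "norm (phi (l \<otimes> c)) = w"
    by (rule \<kappa>_inj[OF norm_phi_in_Norms(1) \<open>w \<in> Norms\<close>])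
  then have "norm (phi c) = w"
    using norm_phi_smul_le[OF \<open>0 \<le> l\<close> \<open>l \<le> 1\<close>, of c] norm_phi_plus_le[of a b]
    by (simp add: c_def w_def)
  then have "cnorm c = cnorm a + cnorm b"
    using \<epsilon>(1) by (simp add: cnorm_def \<kappa>_w abs_mult)
  with less show False by simp
qed

definition cdist :: "'a \<Rightarrow> 'a \<Rightarrow> real" where
  "cdist x y = cnorm (\<ominus> x \<oplus> y)"

lemma cdist_eq_gyrometric: "cdist x y = \<bar>\<kappa> (gyrometric (\<oplus>) neg phi x y)\<bar>"
  by (simp add: cdist_def cnorm_def gyrometric_def)

lemma neg_plus_commute: "\<ominus> (\<ominus> x \<oplus> y) = gyr (\<ominus> x) y (\<ominus> y \<oplus> x)"
  using neg_plus[of "\<ominus> x" y] by simp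

sublocale cdist: Metric_space UNIV cdist
proof
  fix x y z
  show "0 \<le> cdist x y"
    by (simp add: cdist_def cnorm_def)
  show "cdist x y = cdist y x"
    by (metis cdist_def cnorm_gyr cnorm_neg neg_plus_commute)
  show "cdist x y = 0 \<longleftrightarrow> x = y"
    by (metis cdist_def cnorm_eq_0_iff left_inv neg_neg neg_unique)
  have "\<ominus> x \<oplus> z = (\<ominus> x \<oplus> y) \<oplus> gyr (\<ominus> x) y (\<ominus> y \<oplus> z)"
    by (metis left_gyroassoc left_cancel')
  then show "cdist x z \<le> cdist x y + cdist y z"
    by (metis cdist_def cnorm_gyr cnorm_plus_le)
qed

definition mid :: "'a \<Rightarrow> 'a \<Rightarrow> 'a" where
  "mid a b = a \<oplus> (1/2) \<otimes> (\<ominus> a \<oplus> b)"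

lemma gyromidpoint_eq_mid: "gyromidpoint (\<oplus>) neg gyr (\<otimes>) a b = mid a b"
proof -
  define w c where "w = \<ominus> a \<oplus> b" and "c = (1/2) \<otimes> w"
  have "\<ominus> (a \<oplus> \<ominus> b) = w"
    by (metis w_def gyr_inverse gyr_neg gyrocommutative neg_neg neg_plus)
  then have "gyr a (\<ominus> b) b = w \<oplus> a"
    by (simp add: gyrator_identity)
  then have coop: "coop (\<oplus>) neg gyr a b = a \<oplus> (w \<oplus> a)"
    by (simp add: coop_def)
  have "mid a b \<oplus> mid a b = a \<oplus> (c \<oplus> (c \<oplus> a))"
    unfolding mid_def c_def[symmetric] w_def[symmetric]
    by (metis gyrocommutative left_gyroassoc)
  also have "\<dots> = a \<oplus> (w \<oplus> a)"
    using left_gyroassoc[of c c a] by (simp add: c_def half_plus_half)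
  finally have "2 \<otimes> mid a b = coop (\<oplus>) neg gyr a b"
    by (simp add: smul_two coop)
  then show ?thesis
    unfolding gyromidpoint_def by (metis smul_mult smul_one field_sum_of_halves mult_2_right)
qed

definition reflect :: "'a \<Rightarrow> 'a \<Rightarrow> 'a" where
  "reflect m x = m \<oplus> \<ominus> (\<ominus> m \<oplus> x)"

lemma reflect_reflect [simp]: "reflect m (reflect m x) = x"
  by (simp add: reflect_def)

lemma reflect_centre [simp]: "reflect m m = m"
  by (simp add: reflect_def)

lemma reflect_mid_left: "reflect (mid a b) a = b"
proof -
  define u where "u = (1/2) \<otimes> (\<ominus> a \<oplus> b)"
  have "\<ominus> mid a b \<oplus> a = gyr a u (\<ominus> u)"
    using neg_plus_translate[of a u e] by (simp add: mid_def u_def)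
  moreover have "\<ominus> mid a b \<oplus> b = gyr a u u"
    using neg_plus_translate[of a u "\<ominus> a \<oplus> b"] by (simp add: mid_def u_def neg_half_plus)
  ultimately have "\<ominus> (\<ominus> mid a b \<oplus> a) = \<ominus> mid a b \<oplus> b"
    by (simp add: gyr_neg)
  then show ?thesis
    by (simp add: reflect_def)
qed

lemma reflect_mid_right: "reflect (mid a b) b = a"
  using reflect_reflect reflect_mid_left by metis

lemma gyrometric_reflect:
  "gyrometric (\<oplus>) neg phi (reflect m x) (reflect m y) = gyrometric (\<oplus>) neg phi x y"
proof -
  define u v where "u = \<ominus> m \<oplus> x" and "v = \<ominus> m \<oplus> y"
  have "gyrometric (\<oplus>) neg phi (reflect m x) (reflect m y) = norm (phi (u \<oplus> \<ominus> v))"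
    by (simp add: gyrometric_def reflect_def u_def v_def neg_plus_translate norm_phi_gyr)
  also have "\<dots> = norm (phi (\<ominus> v \<oplus> u))"
    by (metis gyrocommutative norm_phi_gyr)
  also have "\<dots> = norm (phi (\<ominus> y \<oplus> x))"
    by (simp add: u_def v_def neg_plus_translate norm_phi_gyr)
  also have "\<dots> = gyrometric (\<oplus>) neg phi x y"
    by (metis gyrometric_def neg_plus_commute norm_phi_gyr norm_phi_neg)
  finally show ?thesis .
qed

lemma cdist_reflect: "cdist (reflect m x) x = 2 * cdist x m"
proof -
  define y where "y = \<ominus> m \<oplus> x"
  have "\<ominus> reflect m x \<oplus> x = gyr m (\<ominus> y) (2 \<otimes> y)"
    using neg_plus_translate[of m "\<ominus> y" y] by (simp add: reflect_def y_def smul_two)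
  then have "cdist (reflect m x) x = 2 * cnorm y"
    by (simp add: cdist_def cnorm_smul)
  then show ?thesis
    using cdist.commute by (simp add: cdist_def y_def)
qed

lemma reflect_fixed_imp_centre: "reflect m x = x \<Longrightarrow> x = m"
  using cdist_reflect[of m x] by simp

lemma gyrometric_isometry_fixes_mid:
  assumes "bij h" "\<And>x y. gyrometric (\<oplus>) neg phi (h x) (h y) = gyrometric (\<oplus>) neg phi x y"
    and "h a = a" "h b = b"
  shows "h (mid a b) = mid a b"
proof (rule isometry_fixing_reflected_pair_fixes_centre[OF cdist.Metric_space_axioms,
      where \<sigma> = "reflect (mid a b)" and a = a and b = b])
  show "cdist (reflect (mid a b) x) (reflect (mid a b) y) = cdist x y"
    and "cdist (h x) (h y) = cdist x y" for x y
    by (simp_all add: cdist_eq_gyrometric gyrometric_reflect assms(2))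
qed (simp_all add: assms cdist_reflect reflect_mid_left)

lemma gyrometric_eq_self_imp_eq: "gyrometric (\<oplus>) neg phi x y = gyrometric (\<oplus>) neg phi x x \<Longrightarrow> x = y"
  using cdist_eq_gyrometric[of x y] cdist_eq_gyrometric[of x x] by simp

end

locale GGV_isometry =
  A: GGV_space gplus1 e1 neg1 gyr1 smul1 phi1 addp1 smulp1 \<kappa>1 +
  B: GGV_space gplus2 e2 neg2 gyr2 smul2 phi2 addp2 smulp2 \<kappa>2
  for gplus1 e1 neg1 gyr1 smul1 and phi1 :: "'a \<Rightarrow> 'v1::real_normed_vector" and addp1 smulp1 \<kappa>1
    and gplus2 e2 neg2 gyr2 smul2 and phi2 :: "'b \<Rightarrow> 'v2::real_normed_vector" and addp2 smulp2 \<kappa>2 +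
  fixes T :: "'a \<Rightarrow> 'b"
  assumes surj_T: "surj T"
    and gyrometric_T: "gyrometric gplus2 neg2 phi2 (T x) (T y) = gyrometric gplus1 neg1 phi1 x y"
begin

lemma bij_T: "bij T"
  using surj_T gyrometric_T A.gyrometric_eq_self_imp_eq by (metis bijI injI)

lemma gyrometric_inv_T: "gyrometric gplus1 neg1 phi1 (inv T p) (inv T q) = gyrometric gplus2 neg2 phi2 p q"
  by (metis gyrometric_T bij_T bij_inv_eq_iff)

lemma T_mid: "T (A.mid a b) = B.mid (T a) (T b)"
proof -
  define m1 m2 where "m1 = A.mid a b" and "m2 = B.mid (T a) (T b)"
  \<comment> \<open>Pulling the reflection in m2 back through T and composing with the reflection in m1
    gives an isometry of the first space fixing a and b.\<close>
  define h where "h = A.reflect m1 \<circ> inv T \<circ> B.reflect m2 \<circ> T"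
  have "h m1 = m1"
    unfolding m1_def
  proof (rule A.gyrometric_isometry_fixes_mid)
    show "bij h"
      unfolding h_def using bij_T
      by (intro bij_comp bij_imp_bij_inv involuntory_imp_bij A.reflect_reflect B.reflect_reflect)
    show "gyrometric gplus1 neg1 phi1 (h x) (h y) = gyrometric gplus1 neg1 phi1 x y" for x y
      by (simp add: h_def A.gyrometric_reflect B.gyrometric_reflect gyrometric_inv_T gyrometric_T)
    show "h a = a" "h b = b"
      by (simp_all add: h_def m1_def m2_def A.reflect_mid_left A.reflect_mid_right B.reflect_mid_left
          B.reflect_mid_right bij_T bij_is_inj)
  qed
  then have "inv T (B.reflect m2 (T m1)) = m1"
    using A.reflect_reflect[of m1 "inv T (B.reflect m2 (T m1))"] by (simp add: h_def)
  then have "B.reflect m2 (T m1) = T m1"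
    using bij_T by (metis bij_inv_eq_iff)
  then show ?thesis
    unfolding m1_def m2_def by (rule B.reflect_fixed_imp_centre)
qed

end

theorem theorem13:
  fixes plus1 :: "'a \<Rightarrow> 'a \<Rightarrow> 'a" and e1 :: 'a and neg1 :: "'a \<Rightarrow> 'a"
    and gyr1 :: "'a \<Rightarrow> 'a \<Rightarrow> 'a \<Rightarrow> 'a" and smul1 :: "real \<Rightarrow> 'a \<Rightarrow> 'a"
    and phi1 :: "'a \<Rightarrow> 'v1::real_normed_vector"
    and plus2 :: "'b \<Rightarrow> 'b \<Rightarrow> 'b" and e2 :: 'b and neg2 :: "'b \<Rightarrow> 'b"
    and gyr2 :: "'b \<Rightarrow> 'b \<Rightarrow> 'b \<Rightarrow> 'b" and smul2 :: "real \<Rightarrow> 'b \<Rightarrow> 'b"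
    and phi2 :: "'b \<Rightarrow> 'v2::real_normed_vector"
    and T :: "'a \<Rightarrow> 'b"
  assumes "GGV plus1 e1 neg1 gyr1 smul1 phi1"
    and "GGV plus2 e2 neg2 gyr2 smul2 phi2"
    and "surj T"
    and "\<forall>a b. gyrometric plus2 neg2 phi2 (T a) (T b) = gyrometric plus1 neg1 phi1 a b"
  shows "\<forall>a b. gyromidpoint plus2 neg2 gyr2 smul2 (T a) (T b) = T (gyromidpoint plus1 neg1 gyr1 smul1 a b)"
proof -
  obtain addp1 smulp1 \<kappa>1 where G1: "GGV_space plus1 e1 neg1 gyr1 smul1 phi1 addp1 smulp1 \<kappa>1"
    using GGV_imp_GGV_space[OF assms(1)] .
  obtain addp2 smulp2 \<kappa>2 where G2: "GGV_space plus2 e2 neg2 gyr2 smul2 phi2 addp2 smulp2 \<kappa>2"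
    using GGV_imp_GGV_space[OF assms(2)] .
  interpret GGV_isometry plus1 e1 neg1 gyr1 smul1 phi1 addp1 smulp1 \<kappa>1
      plus2 e2 neg2 gyr2 smul2 phi2 addp2 smulp2 \<kappa>2 T
    using G1 G2 assms(3,4) by (simp add: GGV_isometry_def GGV_isometry_axioms_def)
  show ?thesis
    by (simp add: A.gyromidpoint_eq_mid B.gyromidpoint_eq_mid T_mid)
qed

end
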